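(* For all $n\ge 2$, $HT_n=\ker(\varphi_{HT})$ is isomorphic to $HL_n=\ker(\psi_H)$.
   Context: For $n\ge 2$, the twisted virtual braid group $TVB_n$ is the group with generators $\sigma_1,\dots,\sigma_{n-1}$, $\rho_1,\dots,\rho_{n-1}$, $\gamma_1,\dots,\gamma_n$ and defining relations: $\sigma_i\sigma_{i+1}\sigma_i=\sigma_{i+1}\sigma_i\sigma_{i+1}$ ($1\le i\le n-2$); $\sigma_i\sigma_j=\sigma_j\sigma_i$ ($|i-j|\ge 2$); $\rho_i^2=1$; $\rho_i\rho_j=\rho_j\rho_i$ ($|i-j|\ge2$); $\rho_i\rho_{i+1}\rho_i=\rho_{i+1}\rho_i\rho_{i+1}$ ($1\le i\le n-2$); $\sigma_i\rho_j=\rho_j\sigma_i$ ($|i-j|\ge 2$); $\rho_i\rho_{i+1}\sigma_i=\sigma_{i+1}\rho_i\rho_{i+1}$ ($1\le i\le n-2$); $\gamma_i^2=1$ and $\gamma_i\gamma_j=\gamma_j\gamma_i$ (all $i,j$); $\gamma_j\rho_i=\rho_i\gamma_j$ and $\gamma_j\sigma_i=\sigma_i\gamma_j$ for $j\notin\{i,i+1\}$; $\rho_i\gamma_i=\gamma_{i+1}\rho_i$ ($1\le i\le n-1$); $\rho_i\sigma_i\rho_i=\gamma_{i+1}\gamma_i\sigma_i\gamma_i\gamma_{i+1}$ ($1\le i\le n-1$). $TVH_n$ is the kernel of $\varphi_H:TVB_n\to S_n$, $\sigma_i\mapsto e$, $\rho_i\mapsto(i,i+1)$, $\gamma_j\mapsto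 e$. In $TVB_n$ define $x_{i,i+1}=\sigma_i$, $x_{i+1,i}=\rho_i\sigma_i\rho_i$ ($1\le i\le n-1$), and for $1\le i<j-1\le n-1$: $x_{ij}=\rho_{j-1}\cdots\rho_{i+1}\sigma_i\rho_{i+1}\cdots\rho_{j-1}$, $x_{ji}=\rho_{j-1}\cdots\rho_{i+1}\rho_i\sigma_i\rho_i\rho_{i+1}\cdots\rho_{j-1}$; these together with the $\gamma_j$ generate $TVH_n$. $A_n=\langle\gamma_1,\dots,\gamma_n\rangle$; $\psi_H:TVH_n\to A_n$ is the homomorphism with $x_{kl}\mapsto e$, $\gamma_j\mapsto\gamma_j$; $HL_n=\ker\psi_H$. $TS_n=\langle\rho_1,\dots,\rho_{n-1},\gamma_1,\dots,\gamma_n\rangle\le TVB_n$, and $\varphi_{HT}:TVB_n\to TS_n$ is the homomorphism $\sigma_i\mapsto e$, $\rho_i\mapsto\rho_i$, $\gamma_j\mapsto\gamma_j$; $HT_n=\ker\varphi_{HT}$. *)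

theory Defs
  imports "HOL-Algebra.Sym_Groups" "HOL-Algebra.Generated_Groups"
begin

text \<open>A word is a list of letters (g, True) = g and (g, False) = g inverse.\<close>
type_synonym 'g word = "('g \<times> bool) list"

inductive_set pres_eq :: "('g word \<times> 'g word) set \<Rightarrow> ('g word \<times> 'g word) set"
  for R :: "('g word \<times> 'g word) set" where
  base: "(u, v) \<in> R \<Longrightarrow> (u, v) \<in> pres_eq R"
| cancel: "([(g, b), (g, \<not> b)], []) \<in> pres_eq R"
| refl: "(u, u) \<in> pres_eq R"
| sym: "(u, v) \<in> pres_eq R \<Longrightarrow> (v, u) \<in> pres_eq R"
| trans: "(u, v) \<in> pres_eq R \<Longrightarrow> (v, w) \<in> pres_eq R \<Longrightarrow> (u, w) \<in> pres_eq R"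
| ctxt: "(u, v) \<in> pres_eq R \<Longrightarrow> (a @ u @ b, a @ v @ b) \<in> pres_eq R"

definition words_on :: "'g set \<Rightarrow> 'g word set" where
  "words_on S = {w. fst ` set w \<subseteq> S}"

definition pres_rel :: "'g set \<Rightarrow> ('g word \<times> 'g word) set \<Rightarrow> ('g word \<times> 'g word) set" where
  "pres_rel S R = pres_eq R \<inter> (words_on S \<times> words_on S)"

definition presented_group :: "'g set \<Rightarrow> ('g word \<times> 'g word) set \<Rightarrow> 'g word set monoid" where
  "presented_group S R =
     \<lparr> carrier = words_on S // pres_rel S R,
       mult = (\<lambda>P Q. {z. \<exists>x\<in>P. \<exists>y\<in>Q. (x @ y, z) \<in> pres_rel S R}),
       one = pres_rel S R `` {[]} \<rparr>"

definition pres_elt :: "'g set \<Rightarrow> ('g word \<times> 'g word) set \<Rightarrow> 'g word \<Rightarrow> 'g word set" where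
  "pres_elt S R w = pres_rel S R `` {w}"

datatype tvb_gen = Sig nat | Rho nat | Gam nat

definition tvb_gens :: "nat \<Rightarrow> tvb_gen set" where
  "tvb_gens n = {Sig i | i. 1 \<le> i \<and> i \<le> n - 1} \<union> {Rho i | i. 1 \<le> i \<and> i \<le> n - 1}
                \<union> {Gam j | j. 1 \<le> j \<and> j \<le> n}"

abbreviation ws :: "nat \<Rightarrow> tvb_gen word" where "ws i \<equiv> [(Sig i, True)]"
abbreviation wr :: "nat \<Rightarrow> tvb_gen word" where "wr i \<equiv> [(Rho i, True)]"
abbreviation wg :: "nat \<Rightarrow> tvb_gen word" where "wg i \<equiv> [(Gam i, True)]"

definition tvb_rels :: "nat \<Rightarrow> (tvb_gen word \<times> tvb_gen word) set" where
  "tvb_rels n =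
     {(ws i @ ws (i+1) @ ws i, ws (i+1) @ ws i @ ws (i+1)) | i. 1 \<le> i \<and> i \<le> n - 2}
   \<union> {(ws i @ ws j, ws j @ ws i) | i j. 1 \<le> i \<and> i \<le> n - 1 \<and> 1 \<le> j \<and> j \<le> n - 1
          \<and> (i + 2 \<le> j \<or> j + 2 \<le> i)}
   \<union> {(wr i @ wr i, []) | i. 1 \<le> i \<and> i \<le> n - 1}
   \<union> {(wr i @ wr j, wr j @ wr i) | i j. 1 \<le> i \<and> i \<le> n - 1 \<and> 1 \<le> j \<and> j \<le> n - 1
          \<and> (i + 2 \<le> j \<or> j + 2 \<le> i)}
   \<union> {(wr i @ wr (i+1) @ wr i, wr (i+1) @ wr i @ wr (i+1)) | i. 1 \<le> i \<and> i \<le> n - 2}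
   \<union> {(ws i @ wr j, wr j @ ws i) | i j. 1 \<le> i \<and> i \<le> n - 1 \<and> 1 \<le> j \<and> j \<le> n - 1
          \<and> (i + 2 \<le> j \<or> j + 2 \<le> i)}
   \<union> {(wr i @ wr (i+1) @ ws i, ws (i+1) @ wr i @ wr (i+1)) | i. 1 \<le> i \<and> i \<le> n - 2}
   \<union> {(wg i @ wg i, []) | i. 1 \<le> i \<and> i \<le> n}
   \<union> {(wg i @ wg j, wg j @ wg i) | i j. 1 \<le> i \<and> i \<le> n \<and> 1 \<le> j \<and> j \<le> n}
   \<union> {(wg j @ wr i, wr i @ wg j) | i j. 1 \<le> i \<and> i \<le> n - 1 \<and> 1 \<le> j \<and> j \<le> n
          \<and> j \<noteq> i \<and> j \<noteq> i + 1}
   \<union> {(wg j @ ws i, ws i @ wg j) | i j. 1 \<le> i \<and> i \<le> n - 1 \<and> 1 \<le> j \<and> j \<le> n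
          \<and> j \<noteq> i \<and> j \<noteq> i + 1}
   \<union> {(wr i @ wg i, wg (i+1) @ wr i) | i. 1 \<le> i \<and> i \<le> n - 1}
   \<union> {(wr i @ ws i @ wr i, wg (i+1) @ wg i @ ws i @ wg i @ wg (i+1)) | i. 1 \<le> i \<and> i \<le> n - 1}"

definition TVB :: "nat \<Rightarrow> tvb_gen word set monoid" where
  "TVB n = presented_group (tvb_gens n) (tvb_rels n)"

definition tvb_elt :: "nat \<Rightarrow> tvb_gen word \<Rightarrow> tvb_gen word set" where
  "tvb_elt n w = pres_elt (tvb_gens n) (tvb_rels n) w"

definition sigma :: "nat \<Rightarrow> nat \<Rightarrow> tvb_gen word set" where "sigma n i = tvb_elt n (ws i)"
definition rho :: "nat \<Rightarrow> nat \<Rightarrow> tvb_gen word set" where "rho n i = tvb_elt n (wr i)"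
definition gamma :: "nat \<Rightarrow> nat \<Rightarrow> tvb_gen word set" where "gamma n j = tvb_elt n (wg j)"

definition x_word :: "nat \<Rightarrow> nat \<Rightarrow> tvb_gen word" where
  "x_word k l =
     (if k < l then concat (map wr (rev [k+1..<l])) @ ws k @ concat (map wr [k+1..<l])
      else concat (map wr (rev [l+1..<k])) @ wr l @ ws l @ wr l @ concat (map wr [l+1..<k]))"

definition xgen :: "nat \<Rightarrow> nat \<Rightarrow> nat \<Rightarrow> tvb_gen word set" where
  "xgen n k l = tvb_elt n (x_word k l)"

definition TS :: "nat \<Rightarrow> tvb_gen word set monoid" where
  "TS n = subgroup_generated (TVB n)
            ({rho n i | i. 1 \<le> i \<and> i \<le> n - 1} \<union> {gamma n j | j. 1 \<le> j \<and> j \<le> n})"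

definition A :: "nat \<Rightarrow> tvb_gen word set monoid" where
  "A n = subgroup_generated (TVB n) {gamma n j | j. 1 \<le> j \<and> j \<le> n}"

definition is_phi_H :: "nat \<Rightarrow> (tvb_gen word set \<Rightarrow> nat \<Rightarrow> nat) \<Rightarrow> bool" where
  "is_phi_H n h \<longleftrightarrow> h \<in> hom (TVB n) (sym_group n)
     \<and> (\<forall>i. 1 \<le> i \<and> i \<le> n - 1 \<longrightarrow> h (sigma n i) = id \<and> h (rho n i) = Transposition.transpose i (i+1))
     \<and> (\<forall>j. 1 \<le> j \<and> j \<le> n \<longrightarrow> h (gamma n j) = id)"

definition TVH :: "nat \<Rightarrow> (tvb_gen word set \<Rightarrow> nat \<Rightarrow> nat) \<Rightarrow> tvb_gen word set monoid" where
  "TVH n h = (TVB n)\<lparr>carrier := kernel (TVB n) (sym_group n) h\<rparr>"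

definition is_phi_HT :: "nat \<Rightarrow> (tvb_gen word set \<Rightarrow> tvb_gen word set) \<Rightarrow> bool" where
  "is_phi_HT n h \<longleftrightarrow> h \<in> hom (TVB n) (TS n)
     \<and> (\<forall>i. 1 \<le> i \<and> i \<le> n - 1 \<longrightarrow> h (sigma n i) = \<one>\<^bsub>TVB n\<^esub> \<and> h (rho n i) = rho n i)
     \<and> (\<forall>j. 1 \<le> j \<and> j \<le> n \<longrightarrow> h (gamma n j) = gamma n j)"

definition is_psi_H :: "nat \<Rightarrow> (tvb_gen word set \<Rightarrow> nat \<Rightarrow> nat) \<Rightarrow> (tvb_gen word set \<Rightarrow> tvb_gen word set) \<Rightarrow> bool" where
  "is_psi_H n phiH h \<longleftrightarrow> h \<in> hom (TVH n phiH) (A n)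
     \<and> (\<forall>k l. 1 \<le> k \<and> k \<le> n \<and> 1 \<le> l \<and> l \<le> n \<and> k \<noteq> l \<longrightarrow> h (xgen n k l) = \<one>\<^bsub>TVB n\<^esub>)
     \<and> (\<forall>j. 1 \<le> j \<and> j \<le> n \<longrightarrow> h (gamma n j) = gamma n j)"

end

(*
  The two kernels are equal as subsets of TVB_n, so the identity map is the isomorphism.
  Let N be their intersection. Every element of TVB_n can be written y g r with y in N, g a
  product of gammas and r a product of rhos: a letter sigma_i moves to the left past g r at the
  cost of its conjugate by g r, and this conjugate lies in N, because conjugating sigma_i by a
  rho-word gives some x_kl (conjugation by rho_j permutes the x_kl as the transposition (j j+1)
  permutes their indices) and both kernels are normal in their ambient groups.
  Since phi_HT fixes g r, an element y g r of HT has g r = 1. For y g r in HL, the element g r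
  lies in HL, so the permutation of r is trivial; by the Coxeter relations the rho-word r is
  then trivial, and psi_H (g) = g forces g = 1. Hence both kernels equal N.
*)
theory Submission
  imports Defs
begin

section \<open>Presented groups\<close>

lemma words_on_Nil [simp]: "[] \<in> words_on S"
  by (simp add: words_on_def)

lemma words_on_Cons [simp]: "a # w \<in> words_on S \<longleftrightarrow> fst a \<in> S \<and> w \<in> words_on S"
  by (auto simp: words_on_def)

lemma words_on_append [simp]: "u @ v \<in> words_on S \<longleftrightarrow> u \<in> words_on S \<and> v \<in> words_on S"
  by (auto simp: words_on_def)

lemma equiv_pres_rel: "equiv (words_on S) (pres_rel S R)"
proof (rule equivI)
  show "pres_rel S R \<subseteq> words_on S \<times> words_on S"
    by (auto simp: pres_rel_def)
  show "refl_on (words_on S) (pres_rel S R)"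
    by (rule refl_onI) (simp add: pres_rel_def pres_eq.refl)
  show "sym (pres_rel S R)"
    by (rule symI) (simp add: pres_rel_def pres_eq.sym)
  show "trans (pres_rel S R)"
    by (rule transI) (auto simp: pres_rel_def intro: pres_eq.trans)
qed

lemma pres_eq_append:
  assumes "(u, u') \<in> pres_eq R" and "(v, v') \<in> pres_eq R"
  shows "(u @ v, u' @ v') \<in> pres_eq R"
  using pres_eq.ctxt[OF assms(1), of "[]" v] pres_eq.ctxt[OF assms(2), of u' "[]"]
  by (auto intro: pres_eq.trans)

lemma pres_elt_eqI:
  "(u, v) \<in> pres_eq R \<Longrightarrow> u \<in> words_on S \<Longrightarrow> v \<in> words_on S \<Longrightarrow> pres_elt S R u = pres_elt S R v"
  unfolding pres_elt_def by (rule equiv_class_eq[OF equiv_pres_rel]) (simp add: pres_rel_def)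

lemma carrier_presented_group: "carrier (presented_group S R) = pres_elt S R ` words_on S"
  by (auto simp: presented_group_def pres_elt_def quotient_def)

lemma one_presented_group: "\<one>\<^bsub>presented_group S R\<^esub> = pres_elt S R []"
  by (simp add: presented_group_def pres_elt_def)

lemma presented_group_mult:
  assumes "u \<in> words_on S" and "v \<in> words_on S"
  shows "pres_elt S R u \<otimes>\<^bsub>presented_group S R\<^esub> pres_elt S R v = pres_elt S R (u @ v)"
proof -
  have "(u @ v, x @ y) \<in> pres_rel S R" if "(u, x) \<in> pres_rel S R" "(v, y) \<in> pres_rel S R" for x y
    using that pres_eq_append unfolding pres_rel_def by auto
  moreover have "(u, u) \<in> pres_rel S R" "(v, v) \<in> pres_rel S R"
    using assms by (auto simp: pres_rel_def intro: pres_eq.refl)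
  ultimately have "{z. \<exists>x\<in>pres_rel S R `` {u}. \<exists>y\<in>pres_rel S R `` {v}. (x @ y, z) \<in> pres_rel S R}
      = pres_rel S R `` {u @ v}"
    using equiv_pres_rel[of S R] unfolding equiv_def sym_def trans_def by blast
  then show ?thesis
    unfolding presented_group_def pres_elt_def by simp
qed

definition word_inv :: "'g word \<Rightarrow> 'g word" where
  "word_inv w = rev (map (\<lambda>(g, b). (g, \<not> b)) w)"

lemma word_inv_in_words_on [simp]: "word_inv w \<in> words_on S \<longleftrightarrow> w \<in> words_on S"
  by (simp add: word_inv_def words_on_def image_image case_prod_beta)

lemma pres_eq_word_inv_cancel: "(word_inv w @ w, []) \<in> pres_eq R"
proof (induction w)
  case Nil
  then show ?case by (simp add: word_inv_def pres_eq.refl)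
next
  case (Cons a w)
  obtain g b where a: "a = (g, b)" by force
  have "(word_inv w @ [(g, \<not> b), (g, \<not> \<not> b)] @ w, word_inv w @ [] @ w) \<in> pres_eq R"
    by (rule pres_eq.ctxt[OF pres_eq.cancel])
  then show ?case
    using Cons a by (auto simp: word_inv_def intro: pres_eq.trans)
qed

lemma group_presented_group: "group (presented_group S R)"
proof (rule groupI)
  fix x assume "x \<in> carrier (presented_group S R)"
  then obtain w where w: "w \<in> words_on S" "x = pres_elt S R w"
    by (auto simp: carrier_presented_group)
  then have "pres_elt S R (word_inv w) \<otimes>\<^bsub>presented_group S R\<^esub> x = \<one>\<^bsub>presented_group S R\<^esub>"
    by (simp add: presented_group_mult one_presented_group pres_elt_eqI[OF pres_eq_word_inv_cancel])
  then show "\<exists>y\<in>carrier (presented_group S R). y \<otimes>\<^bsub>presented_group S R\<^esub> x = \<one>\<^bsub>presented_group S R\<^esub>"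
    using w by (auto simp: carrier_presented_group)
qed (auto simp: carrier_presented_group presented_group_mult one_presented_group)

lemma pres_elt_inverse_letter:
  assumes "g \<in> S"
  shows "pres_elt S R [(g, False)] = inv\<^bsub>presented_group S R\<^esub> pres_elt S R [(g, True)]"
proof -
  interpret group "presented_group S R"
    by (rule group_presented_group)
  have "([(g, False), (g, \<not> False)], []) \<in> pres_eq R"
    by (rule pres_eq.cancel)
  then have "pres_elt S R [(g, False)] \<otimes>\<^bsub>presented_group S R\<^esub> pres_elt S R [(g, True)]
      = \<one>\<^bsub>presented_group S R\<^esub>"
    using assms by (simp add: presented_group_mult one_presented_group pres_elt_eqI)
  moreover have "pres_elt S R [(g, b)] \<in> carrier (presented_group S R)" for b
    using assms by (simp add: carrier_presented_group)
  ultimately show ?thesis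
    by (metis inv_equality)
qed

section \<open>Products of adjacent transpositions\<close>

definition adj_transp :: "nat \<Rightarrow> nat \<Rightarrow> nat" where
  "adj_transp i = Transposition.transpose i (Suc i)"

lemma adj_transp_apply: "adj_transp i x = (if x = i then Suc i else if x = Suc i then i else x)"
  by (simp add: adj_transp_def Transposition.transpose_def)

definition transp_prod :: "nat list \<Rightarrow> nat \<Rightarrow> nat" where
  "transp_prod L = foldr (\<lambda>i p. adj_transp i \<circ> p) L id"

lemma transp_prod_Nil [simp]: "transp_prod [] = id"
  by (simp add: transp_prod_def)

lemma transp_prod_Cons [simp]: "transp_prod (i # L) = adj_transp i \<circ> transp_prod L"
  by (simp add: transp_prod_def)

lemma transp_prod_fixpoint: "\<forall>i\<in>set L. x \<noteq> i \<and> x \<noteq> Suc i \<Longrightarrow> transp_prod L x = x"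
  by (induction L) (auto simp: adj_transp_apply)

lemma transp_prod_in_range: "set L \<subseteq> {1..n-1} \<Longrightarrow> k \<in> {1..n} \<Longrightarrow> transp_prod L k \<in> {1..n}"
  by (induction L) (auto simp: adj_transp_apply)

lemma inj_transp_prod: "inj (transp_prod L)"
proof (induction L)
  case (Cons i L)
  then show ?case
    unfolding transp_prod_Cons adj_transp_def by (rule inj_compose[OF inj_transpose])
qed simp

lemma transp_prod_descending: "j \<le> m \<Longrightarrow> transp_prod (rev [j..<Suc m]) j = Suc m"
proof (induction m)
  case (Suc m)
  then show ?case
    by (cases "j = Suc m") (auto simp: adj_transp_apply)
qed (simp add: adj_transp_apply)

section \<open>Words in the Coxeter generators of the symmetric group\<close>

locale coxeter_relations = group G for G (structure) +
  fixes n :: nat and r :: "nat \<Rightarrow> 'a"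
  assumes r_closed: "1 \<le> i \<Longrightarrow> i \<le> n - 1 \<Longrightarrow> r i \<in> carrier G"
    and r_involution: "1 \<le> i \<Longrightarrow> i \<le> n - 1 \<Longrightarrow> r i \<otimes> r i = \<one>"
    and r_commute: "\<lbrakk>1 \<le> i; i \<le> n - 1; 1 \<le> j; j \<le> n - 1; i + 2 \<le> j \<or> j + 2 \<le> i\<rbrakk>
      \<Longrightarrow> r i \<otimes> r j = r j \<otimes> r i"
    and r_braid: "1 \<le> i \<Longrightarrow> i \<le> n - 2 \<Longrightarrow> r i \<otimes> r (i+1) \<otimes> r i = r (i+1) \<otimes> r i \<otimes> r (i+1)"
begin

lemma r_r_cancel: "1 \<le> i \<Longrightarrow> i \<le> n - 1 \<Longrightarrow> x \<in> carrier G \<Longrightarrow> r i \<otimes> (r i \<otimes> x) = x"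
  by (simp add: m_assoc[symmetric] r_involution r_closed)

lemma inv_r: "1 \<le> i \<Longrightarrow> i \<le> n - 1 \<Longrightarrow> inv (r i) = r i"
  using inv_equality[OF r_involution] r_closed by blast

definition rprod :: "nat list \<Rightarrow> 'a" where
  "rprod L = foldr (\<lambda>i x. r i \<otimes> x) L \<one>"

lemma rprod_Nil [simp]: "rprod [] = \<one>"
  by (simp add: rprod_def)

lemma rprod_Cons: "rprod (i # L) = r i \<otimes> rprod L"
  by (simp add: rprod_def)

lemma rprod_closed [simp]: "set L \<subseteq> {1..n-1} \<Longrightarrow> rprod L \<in> carrier G"
  by (induction L) (auto simp: rprod_Cons r_closed)

lemma rprod_append:
  "set L \<subseteq> {1..n-1} \<Longrightarrow> set L' \<subseteq> {1..n-1} \<Longrightarrow> rprod (L @ L') = rprod L \<otimes> rprod L'"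
  by (induction L) (auto simp: rprod_Cons r_closed m_assoc)

lemma rprod_snoc: "set L \<subseteq> {1..n-1} \<Longrightarrow> 1 \<le> i \<Longrightarrow> i \<le> n - 1 \<Longrightarrow> rprod (L @ [i]) = rprod L \<otimes> r i"
  by (simp add: rprod_append rprod_Cons r_closed)

lemma r_rprod_commute:
  assumes "set L \<subseteq> {1..n-1}" "1 \<le> h" "h \<le> n - 1" "\<forall>i\<in>set L. h + 2 \<le> i \<or> i + 2 \<le> h"
  shows "r h \<otimes> rprod L = rprod L \<otimes> r h"
  using assms
proof (induction L)
  case (Cons i L)
  then have "r h \<otimes> r i = r i \<otimes> r h" "r i \<in> carrier G" "r h \<in> carrier G" "rprod L \<in> carrier G"
    by (auto intro: r_commute r_closed)
  with Cons show ?case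
    by (simp add: rprod_Cons m_assoc[symmetric]) (simp add: m_assoc)
qed (simp add: r_closed)

lemma inv_rprod: "set L \<subseteq> {1..n-1} \<Longrightarrow> inv (rprod L) = rprod (rev L)"
  by (induction L) (auto simp: rprod_Cons rprod_snoc inv_mult_group r_closed inv_r)

lemma hom_rprod:
  assumes "group_hom G (sym_group n) h" "\<And>i. 1 \<le> i \<Longrightarrow> i \<le> n - 1 \<Longrightarrow> h (r i) = adj_transp i"
    and "set L \<subseteq> {1..n-1}"
  shows "h (rprod L) = transp_prod L"
  using assms(3)
proof (induction L)
  case Nil
  then show ?case
    using group_hom.hom_one[OF assms(1)] by (simp add: sym_group_one)
next
  case (Cons i L)
  then show ?case
    using group_hom.hom_mult[OF assms(1)] by (simp add: rprod_Cons sym_group_mult r_closed assms(2))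
qed

definition rdesc :: "nat \<Rightarrow> nat \<Rightarrow> 'a" where
  "rdesc j M = rprod (rev [j..<M])"

lemma rdesc_closed [simp]: "1 \<le> j \<Longrightarrow> M \<le> n \<Longrightarrow> rdesc j M \<in> carrier G"
  unfolding rdesc_def by (rule rprod_closed) auto

lemma rdesc_empty: "M \<le> j \<Longrightarrow> rdesc j M = \<one>"
  by (simp add: rdesc_def)

lemma rdesc_Suc_top: "j \<le> M \<Longrightarrow> rdesc j (Suc M) = r M \<otimes> rdesc j M"
  by (simp add: rdesc_def rprod_Cons)

lemma rdesc_bot: "rdesc j M = rdesc (Suc j) M \<otimes> r j" if "1 \<le> j" "j < M" "M \<le> n"
proof -
  have "set (rev [Suc j..<M]) \<subseteq> {1..n-1}" "j \<le> n - 1"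
    using that by auto
  then show ?thesis
    unfolding rdesc_def using that by (simp add: upt_conv_Cons rprod_snoc)
qed

lemma rdesc_split: "rdesc j M = rdesc h M \<otimes> rdesc j h" if "1 \<le> j" "j \<le> h" "h \<le> M" "M \<le> n"
proof -
  have "set (rev [h..<M]) \<subseteq> {1..n-1}" "set (rev [j..<h]) \<subseteq> {1..n-1}"
    using that by auto
  then show ?thesis
    unfolding rdesc_def using that upt_add_eq_append[of j h "M - h"] by (simp add: rprod_append)
qed

lemma r_rdesc_commute:
  "\<lbrakk>1 \<le> j; M \<le> n; 1 \<le> h; h \<le> n - 1; h + 2 \<le> j \<or> M + 1 \<le> h\<rbrakk> \<Longrightarrow> r h \<otimes> rdesc j M = rdesc j M \<otimes> r h"
  unfolding rdesc_def by (rule r_rprod_commute) auto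

lemma r_rdesc_shift:
  assumes "1 \<le> j" "j \<le> h" "h + 2 \<le> M" "M \<le> n"
  shows "r h \<otimes> rdesc j M = rdesc j M \<otimes> r (Suc h)"
proof -
  define A B where "A = rdesc (h + 2) M" and "B = rdesc j h"
  have closed: "A \<in> carrier G" "B \<in> carrier G" "r h \<in> carrier G" "r (Suc h) \<in> carrier G"
    using assms by (auto simp: A_def B_def r_closed)
  have split: "rdesc j M = A \<otimes> (r (Suc h) \<otimes> (r h \<otimes> B))"
    using assms rdesc_split[of j h M] rdesc_bot[of h M] rdesc_bot[of "Suc h" M] closed
    by (simp add: A_def B_def m_assoc)
  have "r h \<otimes> A = A \<otimes> r h" "r (Suc h) \<otimes> B = B \<otimes> r (Suc h)"
    using assms by (auto simp: A_def B_def intro!: r_rdesc_commute)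
  moreover have "r h \<otimes> r (Suc h) \<otimes> r h = r (Suc h) \<otimes> r h \<otimes> r (Suc h)"
    using assms r_braid[of h] by simp
  ultimately show ?thesis
    unfolding split using closed by (simp add: m_assoc[symmetric]) (simp add: m_assoc)
qed

lemma rdesc_mult_r:
  assumes "Suc m \<le> n" "1 \<le> j" "j \<le> Suc m" "1 \<le> i" "i \<le> m"
  shows "(\<exists>j'. 1 \<le> j' \<and> j' \<le> Suc m \<and> rdesc j (Suc m) \<otimes> r i = rdesc j' (Suc m))
    \<or> (\<exists>h. 1 \<le> h \<and> h < m \<and> rdesc j (Suc m) \<otimes> r i = r h \<otimes> rdesc j (Suc m))"
proof -
  consider "i + 2 \<le> j" | "Suc i = j" | "i = j" | "j < i"
    by linarith
  then show ?thesis
  proof cases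
    case 1
    then have "rdesc j (Suc m) \<otimes> r i = r i \<otimes> rdesc j (Suc m)"
      using assms by (intro r_rdesc_commute[symmetric]) auto
    then show ?thesis
      using 1 assms by (intro disjI2 exI[of _ i]) auto
  next
    case 2
    then have "rdesc j (Suc m) \<otimes> r i = rdesc i (Suc m)"
      using rdesc_bot[of i "Suc m"] assms by simp
    then show ?thesis
      using assms by (intro disjI1 exI[of _ i]) auto
  next
    case 3
    then have "rdesc j (Suc m) \<otimes> r i = rdesc (Suc j) (Suc m)"
      using rdesc_bot[of j "Suc m"] assms r_involution[of i] by (simp add: m_assoc r_closed)
    then show ?thesis
      using 3 assms by (intro disjI1 exI[of _ "Suc j"]) auto
  next
    case 4
    then obtain h where h: "i = Suc h" "j \<le> h"
      by (cases i) auto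
    then have "rdesc j (Suc m) \<otimes> r i = r h \<otimes> rdesc j (Suc m)"
      using r_rdesc_shift[of j h "Suc m"] assms by simp
    then show ?thesis
      using h assms by (intro disjI2 exI[of _ h]) auto
  qed
qed

lemma rprod_split_top:
  assumes "m \<le> n - 1" "set L \<subseteq> {1..m}"
  shows "\<exists>u j. set u \<subseteq> {1..m-1} \<and> 1 \<le> j \<and> j \<le> Suc m \<and> rprod L = rprod u \<otimes> rdesc j (Suc m)"
  using assms(2)
proof (induction L rule: rev_induct)
  case Nil
  show ?case
    by (intro exI[of _ "[]"] exI[of _ "Suc m"]) (simp add: rdesc_empty)
next
  case (snoc i L)
  then obtain u j where u: "set u \<subseteq> {1..m-1}" and j: "1 \<le> j" "j \<le> Suc m"
    and L: "rprod L = rprod u \<otimes> rdesc j (Suc m)"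
    by auto
  have i: "1 \<le> i" "i \<le> m"
    using snoc.prems by auto
  have words: "set L \<subseteq> {1..n-1}" "set u \<subseteq> {1..n-1}"
    using assms u snoc.prems by (auto simp: subset_iff)
  have closed: "rprod u \<in> carrier G" "rdesc j (Suc m) \<in> carrier G"
    using assms words j i by auto
  have Li: "rprod (L @ [i]) = rprod u \<otimes> (rdesc j (Suc m) \<otimes> r i)"
    using L words assms i closed by (simp add: rprod_snoc m_assoc r_closed)
  from rdesc_mult_r[of m j i] assms i j
  consider (absorb) j' where "1 \<le> j'" "j' \<le> Suc m" "rdesc j (Suc m) \<otimes> r i = rdesc j' (Suc m)"
    | (pass) h where "1 \<le> h" "h < m" "rdesc j (Suc m) \<otimes> r i = r h \<otimes> rdesc j (Suc m)"
    by fastforce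
  then show ?case
  proof cases
    case absorb
    then show ?thesis
      using Li u by auto
  next
    case pass
    then have "rprod (L @ [i]) = rprod (u @ [h]) \<otimes> rdesc j (Suc m)"
      using Li closed words assms by (simp add: rprod_snoc m_assoc r_closed)
    then show ?thesis
      using u j pass by (intro exI[of _ "u @ [h]"] exI[of _ j]) auto
  qed
qed

text \<open>The relations alone only bring a word into the form u followed by a descending chain; a
  homomorphism onto the symmetric group detects that the chain must be empty.\<close>
lemma rprod_eq_one_if_transp_prod_id:
  assumes hom: "group_hom G (sym_group n) h"
    and h_r: "\<And>i. 1 \<le> i \<Longrightarrow> i \<le> n - 1 \<Longrightarrow> h (r i) = adj_transp i"
    and "set L \<subseteq> {1..n-1}" "transp_prod L = id"
  shows "rprod L = \<one>"
proof -
  have "rprod L = \<one>" if "m \<le> n - 1" "set L \<subseteq> {1..m}" "transp_prod L = id" for m L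
    using that
  proof (induction m arbitrary: L)
    case (Suc m)
    obtain u j where u: "set u \<subseteq> {1..m}" and j: "1 \<le> j" "j \<le> Suc (Suc m)"
      and L: "rprod L = rprod u \<otimes> rdesc j (Suc (Suc m))"
      using rprod_split_top[OF Suc.prems(1,2)] by auto
    have words: "set u \<subseteq> {1..n-1}" "set (rev [j..<Suc (Suc m)]) \<subseteq> {1..n-1}" "set L \<subseteq> {1..n-1}"
      using Suc.prems u j by auto
    have "transp_prod L = h (rprod u \<otimes> rdesc j (Suc (Suc m)))"
      using hom_rprod[OF hom h_r words(3)] L by simp
    also have "\<dots> = h (rprod u) \<circ> h (rprod (rev [j..<Suc (Suc m)]))"
      using words group_hom.hom_mult[OF hom] unfolding rdesc_def by (simp add: sym_group_mult)
    also have "\<dots> = transp_prod u \<circ> transp_prod (rev [j..<Suc (Suc m)])"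
      using words by (simp only: hom_rprod[OF hom h_r])
    finally have chain: "transp_prod L = transp_prod u \<circ> transp_prod (rev [j..<Suc (Suc m)])" .
    have "\<not> j \<le> Suc m"
    proof
      assume "j \<le> Suc m"
      moreover have "transp_prod u (Suc (Suc m)) = Suc (Suc m)"
        using u by (intro transp_prod_fixpoint) auto
      ultimately have "transp_prod L j = Suc (Suc m)"
        by (simp only: chain comp_apply transp_prod_descending)
      with \<open>j \<le> Suc m\<close> Suc.prems(3) show False
        by simp
    qed
    then have empty: "rev [j..<Suc (Suc m)] = []"
      by simp
    then have "rprod L = rprod u"
      using L words by (simp add: rdesc_def)
    moreover have "transp_prod u = id"
      using chain Suc.prems(3) by (metis empty transp_prod_Nil comp_id)
    ultimately show ?case
      using Suc.IH[of u] Suc.prems(1) u by simp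
  qed simp
  then show ?thesis
    using assms by blast
qed

end

section \<open>Conjugates of the generators sigma_i\<close>

context group
begin

definition conjugate :: "'a \<Rightarrow> 'a \<Rightarrow> 'a" where
  "conjugate a x = a \<otimes> x \<otimes> inv a"

lemma conjugate_closed [simp]: "a \<in> carrier G \<Longrightarrow> x \<in> carrier G \<Longrightarrow> conjugate a x \<in> carrier G"
  by (simp add: conjugate_def)

lemma conjugate_one [simp]: "x \<in> carrier G \<Longrightarrow> conjugate \<one> x = x"
  by (simp add: conjugate_def)

lemma conjugate_mult:
  "a \<in> carrier G \<Longrightarrow> b \<in> carrier G \<Longrightarrow> x \<in> carrier G \<Longrightarrow> conjugate (a \<otimes> b) x = conjugate a (conjugate b x)"
  by (simp add: conjugate_def m_assoc inv_mult_group)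

lemma conjugate_hom:
  "a \<in> carrier G \<Longrightarrow> x \<in> carrier G \<Longrightarrow> y \<in> carrier G \<Longrightarrow> conjugate a (x \<otimes> y) = conjugate a x \<otimes> conjugate a y"
  by (simp add: conjugate_def m_assoc[symmetric]) (simp add: m_assoc)

lemma conjugate_inv: "a \<in> carrier G \<Longrightarrow> x \<in> carrier G \<Longrightarrow> conjugate a (inv x) = inv (conjugate a x)"
  by (simp add: conjugate_def inv_mult_group m_assoc)

lemma conjugate_eqI:
  "a \<in> carrier G \<Longrightarrow> x \<in> carrier G \<Longrightarrow> y \<in> carrier G \<Longrightarrow> a \<otimes> x = y \<otimes> a \<Longrightarrow> conjugate a x = y"
  by (simp add: conjugate_def m_assoc)

lemma mult_conjugate: "a \<in> carrier G \<Longrightarrow> x \<in> carrier G \<Longrightarrow> a \<otimes> x = conjugate a x \<otimes> a"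
  by (simp add: conjugate_def m_assoc)

lemma conjugate_in_normal: "N \<lhd> G \<Longrightarrow> a \<in> carrier G \<Longrightarrow> x \<in> N \<Longrightarrow> conjugate a x \<in> N"
  unfolding conjugate_def by (rule normal.inv_op_closed2)

end

text \<open>Only the relations of TVB_n that the argument uses.\<close>
locale tvb_relations = coxeter_relations +
  fixes s g :: "nat \<Rightarrow> 'a"
  assumes s_closed: "1 \<le> i \<Longrightarrow> i \<le> n - 1 \<Longrightarrow> s i \<in> carrier G"
    and g_closed: "1 \<le> j \<Longrightarrow> j \<le> n \<Longrightarrow> g j \<in> carrier G"
    and s_r_commute: "\<lbrakk>1 \<le> i; i \<le> n - 1; 1 \<le> j; j \<le> n - 1; i + 2 \<le> j \<or> j + 2 \<le> i\<rbrakk>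
      \<Longrightarrow> s i \<otimes> r j = r j \<otimes> s i"
    and r_r_s: "1 \<le> i \<Longrightarrow> i \<le> n - 2 \<Longrightarrow> r i \<otimes> r (i+1) \<otimes> s i = s (i+1) \<otimes> r i \<otimes> r (i+1)"
    and g_involution: "1 \<le> j \<Longrightarrow> j \<le> n \<Longrightarrow> g j \<otimes> g j = \<one>"
    and g_r_commute: "\<lbrakk>1 \<le> i; i \<le> n - 1; 1 \<le> j; j \<le> n; j \<noteq> i; j \<noteq> i + 1\<rbrakk>
      \<Longrightarrow> g j \<otimes> r i = r i \<otimes> g j"
    and r_g: "1 \<le> i \<Longrightarrow> i \<le> n - 1 \<Longrightarrow> r i \<otimes> g i = g (i+1) \<otimes> r i"
begin

lemma conjugate_r_involution: "1 \<le> j \<Longrightarrow> j \<le> n - 1 \<Longrightarrow> x \<in> carrier G \<Longrightarrow> conjugate (r j) (conjugate (r j) x) = x"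
  by (simp add: conjugate_mult[symmetric] r_involution r_closed)

text \<open>x_adj True m and x_adj False m are the paper's x_(m,m+1) and x_(m+1,m).\<close>
definition x_adj :: "bool \<Rightarrow> nat \<Rightarrow> 'a" where
  "x_adj b m = (if b then s m else r m \<otimes> s m \<otimes> r m)"

lemma x_adj_closed [simp]: "1 \<le> m \<Longrightarrow> m \<le> n - 1 \<Longrightarrow> x_adj b m \<in> carrier G"
  by (simp add: x_adj_def s_closed r_closed)

lemma conjugate_r_x_adj_far:
  assumes "1 \<le> m" "m \<le> n - 1" "1 \<le> j" "j \<le> n - 1" "j + 2 \<le> m \<or> m + 2 \<le> j"
  shows "conjugate (r j) (x_adj b m) = x_adj b m"
proof -
  have "conjugate (r j) (s m) = s m" "conjugate (r j) (r m) = r m"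
    using assms s_r_commute[of m j] r_commute[of j m] by (auto intro!: conjugate_eqI r_closed s_closed)
  with assms show ?thesis
    by (simp add: x_adj_def conjugate_hom r_closed s_closed)
qed

lemma conjugate_rr_x_adj:
  assumes "1 \<le> m" "m + 2 \<le> n"
  shows "conjugate (r m \<otimes> r (Suc m)) (x_adj b m) = x_adj b (Suc m)"
proof -
  have closed: "r m \<in> carrier G" "r (Suc m) \<in> carrier G" "s m \<in> carrier G" "s (Suc m) \<in> carrier G"
    using assms by (auto intro: r_closed s_closed)
  have "conjugate (r m \<otimes> r (Suc m)) (s m) = s (Suc m)"
    using assms closed r_r_s[of m] by (intro conjugate_eqI) (auto simp: m_assoc)
  moreover have "conjugate (r m \<otimes> r (Suc m)) (r m) = r (Suc m)"
    using assms closed r_braid[of m] by (intro conjugate_eqI) (auto simp: m_assoc)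
  ultimately show ?thesis
    using closed by (simp add: x_adj_def conjugate_hom)
qed

lemma conjugate_r_x_adj_self: "1 \<le> m \<Longrightarrow> m \<le> n - 1 \<Longrightarrow> conjugate (r m) (x_adj b m) = x_adj (\<not> b) m"
  by (cases b) (auto simp: x_adj_def conjugate_def inv_r m_assoc r_r_cancel r_involution r_closed s_closed)

text \<open>For m < M, x_pair True m M and x_pair False m M are the paper's x_(m,M) and x_(M,m).\<close>
definition x_pair :: "bool \<Rightarrow> nat \<Rightarrow> nat \<Rightarrow> 'a" where
  "x_pair b m M = conjugate (rdesc (Suc m) M) (x_adj b m)"

lemma x_pair_closed [simp]: "1 \<le> m \<Longrightarrow> m \<le> n - 1 \<Longrightarrow> M \<le> n \<Longrightarrow> x_pair b m M \<in> carrier G"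
  by (simp add: x_pair_def)

lemma conjugate_x_pair:
  "a \<in> carrier G \<Longrightarrow> 1 \<le> m \<Longrightarrow> m \<le> n - 1 \<Longrightarrow> M \<le> n \<Longrightarrow>
    conjugate a (x_pair b m M) = conjugate (a \<otimes> rdesc (Suc m) M) (x_adj b m)"
  by (simp add: x_pair_def conjugate_mult)

lemma conjugate_r_x_pair_disjoint:
  assumes "1 \<le> m" "m < M" "M \<le> n" "1 \<le> j" "j \<le> n - 1"
    and "j + 2 \<le> m \<or> M + 1 \<le> j \<or> m < j \<and> Suc j < M"
  shows "conjugate (r j) (x_pair b m M) = x_pair b m M"
proof -
  obtain j' where j': "1 \<le> j'" "j' \<le> n - 1" "j' + 2 \<le> m \<or> m + 2 \<le> j'"
    and shift: "r j \<otimes> rdesc (Suc m) M = rdesc (Suc m) M \<otimes> r j'"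
  proof (cases "j + 2 \<le> m \<or> M + 1 \<le> j")
    case True
    then have "r j \<otimes> rdesc (Suc m) M = rdesc (Suc m) M \<otimes> r j"
      using assms by (intro r_rdesc_commute) auto
    with True assms show ?thesis
      by (intro that[of j]) auto
  next
    case False
    then have "r j \<otimes> rdesc (Suc m) M = rdesc (Suc m) M \<otimes> r (Suc j)"
      using assms by (intro r_rdesc_shift) auto
    with False assms show ?thesis
      by (intro that[of "Suc j"]) auto
  qed
  have "conjugate (r j) (x_pair b m M) = conjugate (rdesc (Suc m) M \<otimes> r j') (x_adj b m)"
    using assms shift by (simp add: conjugate_x_pair r_closed)
  also have "\<dots> = x_pair b m M"
    using assms j' by (simp add: conjugate_mult conjugate_r_x_adj_far r_closed x_pair_def)
  finally show ?thesis .
qed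

lemma conjugate_r_x_pair_bottom:
  assumes "1 \<le> j" "Suc j < M" "M \<le> n"
  shows "conjugate (r j) (x_pair b j M) = x_pair b (Suc j) M"
proof -
  have "r j \<otimes> rdesc (Suc j) M = rdesc (Suc (Suc j)) M \<otimes> (r j \<otimes> r (Suc j))"
    using assms rdesc_bot[of "Suc j" M] r_rdesc_commute[of "Suc (Suc j)" M j]
    by (simp add: m_assoc[symmetric] r_closed)
  then have "conjugate (r j) (x_pair b j M)
      = conjugate (rdesc (Suc (Suc j)) M) (conjugate (r j \<otimes> r (Suc j)) (x_adj b j))"
    using assms by (simp add: conjugate_x_pair conjugate_mult r_closed)
  also have "\<dots> = x_pair b (Suc j) M"
    using assms by (simp add: conjugate_rr_x_adj x_pair_def)
  finally show ?thesis .
qed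

lemma conjugate_r_x_pair_swap:
  "1 \<le> j \<Longrightarrow> j \<le> n - 1 \<Longrightarrow> conjugate (r j) (x_pair b j (Suc j)) = x_pair (\<not> b) j (Suc j)"
  by (simp add: x_pair_def rdesc_empty conjugate_r_x_adj_self)

lemma conjugate_r_x_pair_top:
  assumes "1 \<le> m" "m < M" "M \<le> n - 1"
  shows "conjugate (r M) (x_pair b m M) = x_pair b m (Suc M)"
proof -
  have "conjugate (r M) (x_pair b m M) = conjugate (r M \<otimes> rdesc (Suc m) M) (x_adj b m)"
    using assms by (intro conjugate_x_pair) (auto simp: r_closed)
  with assms show ?thesis
    by (simp add: rdesc_Suc_top x_pair_def)
qed

text \<open>The two cases left out above follow since conjugation by r j is an involution.\<close>
lemma conjugate_r_x_pair:
  assumes "1 \<le> m" "m < M" "M \<le> n" "1 \<le> j" "j \<le> n - 1"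
  shows "conjugate (r j) (x_pair b m M) =
    (if adj_transp j m < adj_transp j M then x_pair b (adj_transp j m) (adj_transp j M)
     else x_pair (\<not> b) (adj_transp j M) (adj_transp j m))"
proof -
  consider (disjoint) "j + 2 \<le> m \<or> M + 1 \<le> j \<or> m < j \<and> Suc j < M"
    | (bottom) "j = m" "Suc m < M" | (below) "Suc j = m" | (swap) "j = m" "M = Suc m"
    | (top) "j = M" | (below_top) "Suc j = M" "m < j"
    using assms by linarith
  then show ?thesis
  proof cases
    case disjoint
    then show ?thesis
      using assms conjugate_r_x_pair_disjoint[of m M j b] by (auto simp: adj_transp_apply)
  next
    case bottom
    then show ?thesis
      using assms conjugate_r_x_pair_bottom[of j M b] by (auto simp: adj_transp_apply)
  next
    case below
    then have "conjugate (r j) (x_pair b m M) = conjugate (r j) (conjugate (r j) (x_pair b j M))"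
      using assms conjugate_r_x_pair_bottom[of j M b] by simp
    also have "\<dots> = x_pair b j M"
      using assms below by (simp add: conjugate_r_involution)
    finally have "conjugate (r j) (x_pair b m M) = x_pair b j M" .
    then show ?thesis
      using below assms by (auto simp: adj_transp_apply)
  next
    case swap
    then show ?thesis
      using assms conjugate_r_x_pair_swap[of j b] by (auto simp: adj_transp_apply)
  next
    case top
    then show ?thesis
      using assms conjugate_r_x_pair_top[of m M b] by (auto simp: adj_transp_apply)
  next
    case below_top
    then have "conjugate (r j) (x_pair b m M) = conjugate (r j) (conjugate (r j) (x_pair b m j))"
      using assms conjugate_r_x_pair_top[of m j b] by simp
    also have "\<dots> = x_pair b m j"
      using assms below_top by (simp add: conjugate_r_involution)
    finally have "conjugate (r j) (x_pair b m M) = x_pair b m j" .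
    then show ?thesis
      using below_top assms by (auto simp: adj_transp_apply)
  qed
qed

definition x_elt :: "nat \<Rightarrow> nat \<Rightarrow> 'a" where
  "x_elt k l = (if k < l then x_pair True k l else x_pair False l k)"

lemma conjugate_r_x_elt:
  assumes "k \<in> {1..n}" "l \<in> {1..n}" "k \<noteq> l" "1 \<le> j" "j \<le> n - 1"
  shows "conjugate (r j) (x_elt k l) = x_elt (adj_transp j k) (adj_transp j l)"
proof (cases "k < l")
  case True
  then show ?thesis
    using assms conjugate_r_x_pair[of k l j True] by (simp add: x_elt_def)
next
  case False
  moreover have "adj_transp j k \<noteq> adj_transp j l"
    using assms by (auto simp: adj_transp_apply)
  ultimately show ?thesis
    using assms conjugate_r_x_pair[of l k j False] by (auto simp: x_elt_def)
qed

lemma conjugate_rprod_s: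
  assumes "set L \<subseteq> {1..n-1}" "1 \<le> i" "i \<le> n - 1"
  shows "conjugate (rprod L) (s i) = x_elt (transp_prod L i) (transp_prod L (Suc i))"
  using assms(1)
proof (induction L)
  case Nil
  then show ?case
    using assms by (simp add: x_elt_def x_pair_def x_adj_def rdesc_empty s_closed)
next
  case (Cons j L)
  have "transp_prod L i \<in> {1..n}" "transp_prod L (Suc i) \<in> {1..n}"
    "transp_prod L i \<noteq> transp_prod L (Suc i)"
    using assms Cons.prems transp_prod_in_range[of L n] inj_transp_prod[of L] by (auto dest: injD)
  with Cons show ?case
    using assms by (simp add: rprod_Cons conjugate_mult r_closed s_closed conjugate_r_x_elt)
qed

lemma r_g_swap:
  assumes "1 \<le> i" "i \<le> n - 1" "1 \<le> j" "j \<le> n"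
  shows "r i \<otimes> g j = g (adj_transp i j) \<otimes> r i"
proof -
  consider "j = i" | "j = Suc i" | "j \<noteq> i" "j \<noteq> Suc i"
    by blast
  then show ?thesis
  proof cases
    case 2
    have "r i \<otimes> g (Suc i) = r i \<otimes> (r i \<otimes> g i \<otimes> r i)"
      using assms r_g[of i] by (simp add: m_assoc r_r_cancel r_involution r_closed g_closed)
    then show ?thesis
      using 2 assms by (simp add: adj_transp_apply m_assoc[symmetric] r_involution r_closed g_closed)
  qed (use assms r_g g_r_commute in \<open>auto simp: adj_transp_apply\<close>)
qed

lemma rprod_g:
  assumes "set L \<subseteq> {1..n-1}" "1 \<le> j" "j \<le> n"
  shows "rprod L \<otimes> g j = g (transp_prod L j) \<otimes> rprod L"
  using assms
proof (induction L arbitrary: j)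
  case (Cons i L)
  have j': "1 \<le> transp_prod L j" "transp_prod L j \<le> n"
    using Cons.prems transp_prod_in_range[of L n j] by auto
  have "rprod (i # L) \<otimes> g j = r i \<otimes> g (transp_prod L j) \<otimes> rprod L"
    using Cons j' by (simp add: rprod_Cons m_assoc r_closed g_closed)
  moreover have "g (adj_transp i (transp_prod L j)) \<in> carrier G"
    using Cons.prems j' by (auto simp: adj_transp_apply intro!: g_closed)
  ultimately show ?case
    using Cons.prems j' by (simp add: r_g_swap rprod_Cons m_assoc r_closed g_closed)
qed (simp add: g_closed)

definition gprod :: "nat list \<Rightarrow> 'a" where
  "gprod a = foldr (\<lambda>j x. g j \<otimes> x) a \<one>"

lemma gprod_Nil [simp]: "gprod [] = \<one>"
  by (simp add: gprod_def)

lemma gprod_Cons: "gprod (j # a) = g j \<otimes> gprod a"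
  by (simp add: gprod_def)

lemma gprod_closed [simp]: "set a \<subseteq> {1..n} \<Longrightarrow> gprod a \<in> carrier G"
  by (induction a) (auto simp: gprod_Cons g_closed)

lemma gprod_snoc: "set a \<subseteq> {1..n} \<Longrightarrow> 1 \<le> j \<Longrightarrow> j \<le> n \<Longrightarrow> gprod (a @ [j]) = gprod a \<otimes> g j"
  by (induction a) (auto simp: gprod_Cons g_closed m_assoc)

lemma inv_g: "1 \<le> j \<Longrightarrow> j \<le> n \<Longrightarrow> inv (g j) = g j"
  using inv_equality[OF g_involution] g_closed by blast

end

section \<open>The group TVB_n and the two kernels\<close>

lemma group_TVB: "group (TVB n)"
  unfolding TVB_def by (rule group_presented_group)

lemma carrier_TVB: "carrier (TVB n) = tvb_elt n ` words_on (tvb_gens n)"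
  unfolding TVB_def tvb_elt_def[abs_def] by (rule carrier_presented_group)

lemma one_TVB: "\<one>\<^bsub>TVB n\<^esub> = tvb_elt n []"
  unfolding TVB_def tvb_elt_def by (rule one_presented_group)

lemma tvb_elt_mult:
  "u \<in> words_on (tvb_gens n) \<Longrightarrow> v \<in> words_on (tvb_gens n) \<Longrightarrow>
    tvb_elt n u \<otimes>\<^bsub>TVB n\<^esub> tvb_elt n v = tvb_elt n (u @ v)"
  unfolding TVB_def tvb_elt_def by (rule presented_group_mult)

lemma tvb_elt_closed: "w \<in> words_on (tvb_gens n) \<Longrightarrow> tvb_elt n w \<in> carrier (TVB n)"
  by (simp add: carrier_TVB)

lemma tvb_elt_eqI:
  "(u, v) \<in> tvb_rels n \<Longrightarrow> u \<in> words_on (tvb_gens n) \<Longrightarrow> v \<in> words_on (tvb_gens n) \<Longrightarrow>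
    tvb_elt n u = tvb_elt n v"
  unfolding tvb_elt_def by (rule pres_elt_eqI[OF pres_eq.base])

lemma tvb_elt_inverse_letter:
  "x \<in> tvb_gens n \<Longrightarrow> tvb_elt n [(x, False)] = inv\<^bsub>TVB n\<^esub> tvb_elt n [(x, True)]"
  unfolding TVB_def tvb_elt_def by (rule pres_elt_inverse_letter)

lemma tvb_gens_iff [simp]:
  "Sig i \<in> tvb_gens n \<longleftrightarrow> 1 \<le> i \<and> i \<le> n - 1"
  "Rho i \<in> tvb_gens n \<longleftrightarrow> 1 \<le> i \<and> i \<le> n - 1"
  "Gam i \<in> tvb_gens n \<longleftrightarrow> 1 \<le> i \<and> i \<le> n"
  by (auto simp: tvb_gens_def)

lemma tvb_relations_TVB: "tvb_relations (TVB n) n (rho n) (sigma n) (gamma n)"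
proof -
  interpret group "TVB n"
    by (rule group_TVB)
  have [simp]: "Suc i \<le> n - Suc 0" if "1 \<le> i" "i \<le> n - 2" for i
    using that by linarith
  have [simp]: "i \<le> n - Suc 0" if "i \<le> n - 2" for i
    using that by linarith
  show ?thesis
    by unfold_locales
      (simp_all add: sigma_def rho_def gamma_def tvb_elt_mult one_TVB tvb_elt_closed,
       (rule tvb_elt_eqI; auto simp: tvb_rels_def)+)
qed

lemma TS_simps [simp]: "mult (TS n) = mult (TVB n)" "one (TS n) = one (TVB n)"
  by (simp_all add: TS_def subgroup_generated_def)

lemma A_simps [simp]: "mult (A n) = mult (TVB n)" "one (A n) = one (TVB n)"
  by (simp_all add: A_def subgroup_generated_def)

lemma TVH_simps [simp]:
  "mult (TVH n h) = mult (TVB n)" "carrier (TVH n h) = kernel (TVB n) (sym_group n) h"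
  by (simp_all add: TVH_def)

lemma rho_word_in_words_on: "set L \<subseteq> {1..n-1} \<Longrightarrow> map (\<lambda>i. (Rho i, True)) L \<in> words_on (tvb_gens n)"
  by (induction L) auto

locale tvb =
  fixes n :: nat

sublocale tvb \<subseteq> tvb_relations "TVB n" n "rho n" "sigma n" "gamma n"
  by (rule tvb_relations_TVB)

context tvb
begin

lemma tvb_elt_rho_word: "set L \<subseteq> {1..n-1} \<Longrightarrow> tvb_elt n (map (\<lambda>i. (Rho i, True)) L) = rprod L"
proof (induction L)
  case (Cons i L)
  then show ?case
    using tvb_elt_mult[of "wr i" n "map (\<lambda>i. (Rho i, True)) L"] rho_word_in_words_on[of L n]
    by (simp add: rprod_Cons rho_def[symmetric])
qed (simp add: one_TVB)

lemma tvb_elt_conjugate_word: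
  assumes "set L \<subseteq> {1..n-1}" "w \<in> words_on (tvb_gens n)"
  shows "tvb_elt n (concat (map wr (rev L)) @ w @ concat (map wr L))
    = conjugate (rprod (rev L)) (tvb_elt n w)"
proof -
  have words: "set (rev L) \<subseteq> {1..n-1}" "map (\<lambda>i. (Rho i, True)) L \<in> words_on (tvb_gens n)"
    "map (\<lambda>i. (Rho i, True)) (rev L) \<in> words_on (tvb_gens n)"
    using assms rho_word_in_words_on[of L n] rho_word_in_words_on[of "rev L" n] by auto
  then have "tvb_elt n (concat (map wr (rev L)) @ w @ concat (map wr L))
      = rprod (rev L) \<otimes>\<^bsub>TVB n\<^esub> tvb_elt n w \<otimes>\<^bsub>TVB n\<^esub> rprod L"
    using assms
    by (simp add: tvb_elt_mult[symmetric] tvb_elt_rho_word m_assoc tvb_elt_closed del: set_rev)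
  then show ?thesis
    using words assms by (simp add: conjugate_def inv_rprod del: set_rev)
qed

lemma x_elt_eq_xgen:
  assumes "k \<in> {1..n}" "l \<in> {1..n}" "k \<noteq> l"
  shows "x_elt k l = xgen n k l"
proof (cases "k < l")
  case True
  have "set [Suc k..<l] \<subseteq> {1..n-1}"
    using assms True by auto
  then show ?thesis
    using True assms tvb_elt_conjugate_word[of "[Suc k..<l]" "ws k"]
    by (simp add: xgen_def x_word_def x_elt_def x_pair_def x_adj_def rdesc_def sigma_def)
next
  case False
  have "set [Suc l..<k] \<subseteq> {1..n-1}"
    using assms False by auto
  moreover have "tvb_elt n (wr l @ ws l @ wr l) = rho n l \<otimes>\<^bsub>TVB n\<^esub> sigma n l \<otimes>\<^bsub>TVB n\<^esub> rho n l"
    using assms False by (simp add: tvb_elt_mult rho_def sigma_def)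
  ultimately show ?thesis
    using False assms tvb_elt_conjugate_word[of "[Suc l..<k]" "wr l @ ws l @ wr l"]
    by (simp add: xgen_def x_word_def x_elt_def x_pair_def x_adj_def rdesc_def)
qed

end

locale tvb_kernels = tvb +
  fixes phiHT :: "tvb_gen word set \<Rightarrow> tvb_gen word set"
    and phiH :: "tvb_gen word set \<Rightarrow> nat \<Rightarrow> nat"
    and psiH :: "tvb_gen word set \<Rightarrow> tvb_gen word set"
  assumes phi_HT: "is_phi_HT n phiHT"
    and phi_H: "is_phi_H n phiH"
    and psi_H: "is_psi_H n phiH psiH"
begin

lemma group_hom_phiHT: "group_hom (TVB n) (TS n) phiHT"
  using phi_HT group_TVB group.group_subgroup_generated[OF group_TVB]
  by (simp add: is_phi_HT_def group_hom_def group_hom_axioms_def TS_def)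

lemma group_hom_phiH: "group_hom (TVB n) (sym_group n) phiH"
  using phi_H group_TVB sym_group_is_group
  by (simp add: is_phi_H_def group_hom_def group_hom_axioms_def)

lemma subgroup_kernel_phiH: "subgroup (kernel (TVB n) (sym_group n) phiH) (TVB n)"
  by (rule group_hom.subgroup_kernel[OF group_hom_phiH])

lemma group_hom_psiH: "group_hom (TVH n phiH) (A n) psiH"
  using psi_H group.subgroup_imp_group[OF group_TVB subgroup_kernel_phiH]
    group.group_subgroup_generated[OF group_TVB]
  by (simp add: is_psi_H_def group_hom_def group_hom_axioms_def TVH_def A_def)

abbreviation HT :: "tvb_gen word set set" where
  "HT \<equiv> kernel (TVB n) (TS n) phiHT"

abbreviation HL :: "tvb_gen word set set" where
  "HL \<equiv> kernel (TVH n phiH) (A n) psiH"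

lemma subgroup_HL: "subgroup HL (TVB n)"
  using group.incl_subgroup[OF group_TVB subgroup_kernel_phiH]
    group_hom.subgroup_kernel[OF group_hom_psiH]
  by (simp add: TVH_def)

lemma subgroup_HT_Int_HL: "subgroup (HT \<inter> HL) (TVB n)"
  by (rule group.subgroups_Inter_pair[OF group_TVB group_hom.subgroup_kernel[OF group_hom_phiHT] subgroup_HL])

lemma HL_subset_kernel_phiH: "HL \<subseteq> kernel (TVB n) (sym_group n) phiH"
  by (auto simp: kernel_def)

lemma values_on_sigma_rho:
  assumes "1 \<le> i" "i \<le> n - 1"
  shows "phiHT (sigma n i) = \<one>\<^bsub>TVB n\<^esub>" "phiHT (rho n i) = rho n i"
    and "phiH (sigma n i) = id" "phiH (rho n i) = adj_transp i"
  using assms phi_HT phi_H by (auto simp: is_phi_HT_def is_phi_H_def adj_transp_def)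

lemma values_on_gamma:
  assumes "1 \<le> j" "j \<le> n"
  shows "phiHT (gamma n j) = gamma n j" "phiH (gamma n j) = id" "psiH (gamma n j) = gamma n j"
  using assms phi_HT phi_H psi_H by (auto simp: is_phi_HT_def is_phi_H_def is_psi_H_def)

lemma psiH_xgen: "k \<in> {1..n} \<Longrightarrow> l \<in> {1..n} \<Longrightarrow> k \<noteq> l \<Longrightarrow> psiH (xgen n k l) = \<one>\<^bsub>TVB n\<^esub>"
  using psi_H by (auto simp: is_psi_H_def)

lemma phiHT_rprod: "set L \<subseteq> {1..n-1} \<Longrightarrow> phiHT (rprod L) = rprod L"
  by (induction L) (auto simp: rprod_Cons values_on_sigma_rho group_hom.hom_mult[OF group_hom_phiHT]
      group_hom.hom_one[OF group_hom_phiHT] r_closed)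

lemma phiHT_gprod: "set a \<subseteq> {1..n} \<Longrightarrow> phiHT (gprod a) = gprod a"
  by (induction a) (auto simp: gprod_Cons values_on_gamma group_hom.hom_mult[OF group_hom_phiHT]
      group_hom.hom_one[OF group_hom_phiHT] g_closed)

lemma gprod_in_kernel_phiH: "set a \<subseteq> {1..n} \<Longrightarrow> gprod a \<in> kernel (TVB n) (sym_group n) phiH"
proof (induction a)
  case (Cons j a)
  then have "gamma n j \<in> kernel (TVB n) (sym_group n) phiH"
    by (simp add: kernel_def g_closed values_on_gamma sym_group_one)
  with Cons show ?case
    by (simp add: gprod_Cons subgroup.m_closed[OF subgroup_kernel_phiH])
qed (simp add: subgroup.one_closed[OF subgroup_kernel_phiH])

lemma psiH_gprod: "set a \<subseteq> {1..n} \<Longrightarrow> psiH (gprod a) = gprod a"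
proof (induction a)
  case (Cons j a)
  then have "gamma n j \<in> kernel (TVB n) (sym_group n) phiH"
    by (simp add: kernel_def g_closed values_on_gamma sym_group_one)
  with Cons show ?case
    using group_hom.hom_mult[OF group_hom_psiH, of "gamma n j" "gprod a"] gprod_in_kernel_phiH[of a]
    by (simp add: gprod_Cons values_on_gamma)
qed (use group_hom.hom_one[OF group_hom_psiH] in \<open>simp add: TVH_def\<close>)

lemma rprod_eq_one_if_phiH_id: "set L \<subseteq> {1..n-1} \<Longrightarrow> phiH (rprod L) = id \<Longrightarrow> rprod L = \<one>\<^bsub>TVB n\<^esub>"
  using rprod_eq_one_if_transp_prod_id[OF group_hom_phiH] hom_rprod[OF group_hom_phiH]
  by (simp add: values_on_sigma_rho)

lemma conjugate_sigma_in_kernels: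
  assumes "set a \<subseteq> {1..n}" "set L \<subseteq> {1..n-1}" "1 \<le> i" "i \<le> n - 1"
  shows "conjugate (gprod a \<otimes>\<^bsub>TVB n\<^esub> rprod L) (sigma n i) \<in> HT \<inter> HL"
proof
  have sigma: "sigma n i \<in> HT" "sigma n i \<in> kernel (TVB n) (sym_group n) phiH"
    using assms by (simp_all add: kernel_def s_closed values_on_sigma_rho sym_group_one)
  have closed: "gprod a \<otimes>\<^bsub>TVB n\<^esub> rprod L \<in> carrier (TVB n)" "rprod L \<in> carrier (TVB n)"
    using assms by simp_all
  show "conjugate (gprod a \<otimes>\<^bsub>TVB n\<^esub> rprod L) (sigma n i) \<in> HT"
    using group_hom.normal_kernel[OF group_hom_phiHT] closed(1) sigma(1) by (rule conjugate_in_normal)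
  define k l where "k = transp_prod L i" and "l = transp_prod L (Suc i)"
  have kl: "k \<in> {1..n}" "l \<in> {1..n}" "k \<noteq> l"
    using assms transp_prod_in_range[of L n] inj_transp_prod[of L] by (auto simp: k_def l_def dest: injD)
  have x: "conjugate (rprod L) (sigma n i) = xgen n k l"
    using assms kl by (simp add: conjugate_rprod_s x_elt_eq_xgen k_def l_def)
  have "xgen n k l \<in> kernel (TVB n) (sym_group n) phiH"
    unfolding x[symmetric]
    using group_hom.normal_kernel[OF group_hom_phiH] closed(2) sigma(2) by (rule conjugate_in_normal)
  then have "xgen n k l \<in> HL"
    using kl by (simp add: kernel_def psiH_xgen)
  moreover have "gprod a \<in> carrier (TVH n phiH)"
    using assms gprod_in_kernel_phiH by simp
  ultimately have "conjugate (gprod a) (xgen n k l) \<in> HL"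
    using normal.inv_op_closed2[OF group_hom.normal_kernel[OF group_hom_psiH]]
      group.m_inv_consistent[OF group_TVB subgroup_kernel_phiH]
    by (simp add: conjugate_def TVH_def)
  then show "conjugate (gprod a \<otimes>\<^bsub>TVB n\<^esub> rprod L) (sigma n i) \<in> HL"
    using assms x by (simp add: conjugate_mult s_closed)
qed

definition gamma_rho_prods :: "tvb_gen word set set" where
  "gamma_rho_prods =
     {gprod a \<otimes>\<^bsub>TVB n\<^esub> rprod L | a L. set a \<subseteq> {1..n} \<and> set L \<subseteq> {1..n-1}}"

lemma gamma_rho_prodsI:
  "set a \<subseteq> {1..n} \<Longrightarrow> set L \<subseteq> {1..n-1} \<Longrightarrow> gprod a \<otimes>\<^bsub>TVB n\<^esub> rprod L \<in> gamma_rho_prods"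
  by (auto simp: gamma_rho_prods_def)

lemma gamma_rho_prods_closed: "t \<in> gamma_rho_prods \<Longrightarrow> t \<in> carrier (TVB n)"
  by (auto simp: gamma_rho_prods_def)

lemma gamma_rho_prods_mult_rho:
  assumes "t \<in> gamma_rho_prods" "1 \<le> i" "i \<le> n - 1"
  shows "t \<otimes>\<^bsub>TVB n\<^esub> rho n i \<in> gamma_rho_prods"
proof -
  obtain a L where t: "t = gprod a \<otimes>\<^bsub>TVB n\<^esub> rprod L" "set a \<subseteq> {1..n}" "set L \<subseteq> {1..n-1}"
    using assms by (auto simp: gamma_rho_prods_def)
  then have "t \<otimes>\<^bsub>TVB n\<^esub> rho n i = gprod a \<otimes>\<^bsub>TVB n\<^esub> rprod (L @ [i])"
    using assms by (simp add: rprod_snoc m_assoc r_closed)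
  with t assms show ?thesis
    by (simp add: gamma_rho_prodsI)
qed

lemma gamma_rho_prods_mult_gamma:
  assumes "t \<in> gamma_rho_prods" "1 \<le> j" "j \<le> n"
  shows "t \<otimes>\<^bsub>TVB n\<^esub> gamma n j \<in> gamma_rho_prods"
proof -
  obtain a L where t: "t = gprod a \<otimes>\<^bsub>TVB n\<^esub> rprod L" "set a \<subseteq> {1..n}" "set L \<subseteq> {1..n-1}"
    using assms by (auto simp: gamma_rho_prods_def)
  have j': "transp_prod L j \<in> {1..n}"
    using assms t transp_prod_in_range by auto
  then have "t \<otimes>\<^bsub>TVB n\<^esub> gamma n j = gprod (a @ [transp_prod L j]) \<otimes>\<^bsub>TVB n\<^esub> rprod L"
    using assms t by (simp add: rprod_g gprod_snoc m_assoc g_closed)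
  with t j' show ?thesis
    by (simp add: gamma_rho_prodsI)
qed

lemma decomposition_mult_letter:
  assumes "y \<in> HT \<inter> HL" "t \<in> gamma_rho_prods" "x \<in> tvb_gens n"
  shows "\<exists>y' \<in> HT \<inter> HL. \<exists>t' \<in> gamma_rho_prods.
    y \<otimes>\<^bsub>TVB n\<^esub> t \<otimes>\<^bsub>TVB n\<^esub> tvb_elt n [(x, b)] = y' \<otimes>\<^bsub>TVB n\<^esub> t'"
proof -
  define e where "e = tvb_elt n [(x, b)]"
  have y: "y \<in> carrier (TVB n)" and t: "t \<in> carrier (TVB n)" and e: "e \<in> carrier (TVB n)"
    using assms gamma_rho_prods_closed[OF assms(2)] by (auto simp: kernel_def e_def tvb_elt_closed)
  have letter: "e = (if b then tvb_elt n [(x, True)] else inv\<^bsub>TVB n\<^esub> tvb_elt n [(x, True)])"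
    using tvb_elt_inverse_letter[OF assms(3)] by (simp add: e_def)
  have "\<exists>y' \<in> HT \<inter> HL. \<exists>t' \<in> gamma_rho_prods. y \<otimes>\<^bsub>TVB n\<^esub> t \<otimes>\<^bsub>TVB n\<^esub> e = y' \<otimes>\<^bsub>TVB n\<^esub> t'"
  proof (cases x)
    case (Sig i)
    then have i: "1 \<le> i" "i \<le> n - 1"
      using assms(3) by auto
    have sigma: "conjugate t (sigma n i) \<in> HT \<inter> HL"
      using assms(2) i conjugate_sigma_in_kernels by (auto simp: gamma_rho_prods_def)
    have "conjugate t e \<in> HT \<inter> HL"
    proof (cases b)
      case False
      then have "conjugate t e = inv\<^bsub>TVB n\<^esub> conjugate t (sigma n i)"
        using letter Sig t i by (simp add: sigma_def[symmetric] conjugate_inv s_closed)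
      then show ?thesis
        using sigma subgroup.m_inv_closed[OF subgroup_HT_Int_HL] by simp
    qed (use letter Sig sigma in \<open>simp add: sigma_def\<close>)
    moreover have "y \<otimes>\<^bsub>TVB n\<^esub> t \<otimes>\<^bsub>TVB n\<^esub> e = y \<otimes>\<^bsub>TVB n\<^esub> conjugate t e \<otimes>\<^bsub>TVB n\<^esub> t"
      using y t e mult_conjugate[OF t e] by (simp add: m_assoc)
    ultimately show ?thesis
      using assms(1,2) subgroup.m_closed[OF subgroup_HT_Int_HL] by blast
  next
    case (Rho i)
    then have "e = rho n i" "1 \<le> i" "i \<le> n - 1"
      using letter assms(3) by (auto simp: rho_def[symmetric] inv_r)
    then have "y \<otimes>\<^bsub>TVB n\<^esub> t \<otimes>\<^bsub>TVB n\<^esub> e = y \<otimes>\<^bsub>TVB n\<^esub> (t \<otimes>\<^bsub>TVB n\<^esub> rho n i)"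
      "t \<otimes>\<^bsub>TVB n\<^esub> rho n i \<in> gamma_rho_prods"
      using y t e assms(2) by (simp_all add: m_assoc gamma_rho_prods_mult_rho)
    then show ?thesis
      using assms(1) by blast
  next
    case (Gam j)
    then have "e = gamma n j" "1 \<le> j" "j \<le> n"
      using letter assms(3) by (auto simp: gamma_def[symmetric] inv_g)
    then have "y \<otimes>\<^bsub>TVB n\<^esub> t \<otimes>\<^bsub>TVB n\<^esub> e = y \<otimes>\<^bsub>TVB n\<^esub> (t \<otimes>\<^bsub>TVB n\<^esub> gamma n j)"
      "t \<otimes>\<^bsub>TVB n\<^esub> gamma n j \<in> gamma_rho_prods"
      using y t e assms(2) by (simp_all add: m_assoc gamma_rho_prods_mult_gamma)
    then show ?thesis
      using assms(1) by blast
  qed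
  then show ?thesis
    by (simp add: e_def)
qed

lemma tvb_decomposition:
  assumes "x \<in> carrier (TVB n)"
  shows "\<exists>y \<in> HT \<inter> HL. \<exists>t \<in> gamma_rho_prods. x = y \<otimes>\<^bsub>TVB n\<^esub> t"
proof -
  obtain w where w: "w \<in> words_on (tvb_gens n)" "x = tvb_elt n w"
    using assms by (auto simp: carrier_TVB)
  have "\<exists>y \<in> HT \<inter> HL. \<exists>t \<in> gamma_rho_prods. tvb_elt n w = y \<otimes>\<^bsub>TVB n\<^esub> t"
    using w(1)
  proof (induction w rule: rev_induct)
    case Nil
    have "\<one>\<^bsub>TVB n\<^esub> \<in> HT \<inter> HL" "\<one>\<^bsub>TVB n\<^esub> \<in> gamma_rho_prods"
      using subgroup.one_closed[OF subgroup_HT_Int_HL] gamma_rho_prodsI[of "[]" "[]"] by simp_all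
    then show ?case
      by (force simp: one_TVB[symmetric])
  next
    case (snoc l w)
    obtain x b where l: "l = (x, b)"
      by force
    with snoc.prems have "w \<in> words_on (tvb_gens n)" "x \<in> tvb_gens n"
      by auto
    with snoc.IH obtain y t where "y \<in> HT \<inter> HL" "t \<in> gamma_rho_prods" "tvb_elt n w = y \<otimes>\<^bsub>TVB n\<^esub> t"
      by blast
    moreover have "tvb_elt n (w @ [l]) = tvb_elt n w \<otimes>\<^bsub>TVB n\<^esub> tvb_elt n [(x, b)]"
      using \<open>w \<in> _\<close> \<open>x \<in> _\<close> by (simp add: tvb_elt_mult l)
    ultimately show ?case
      using decomposition_mult_letter[of y t x b] \<open>x \<in> _\<close> by simp
  qed
  with w show ?thesis
    by simp
qed

lemma phiHT_gamma_rho_prods: "t \<in> gamma_rho_prods \<Longrightarrow> phiHT t = t"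
  by (auto simp: gamma_rho_prods_def group_hom.hom_mult[OF group_hom_phiHT] phiHT_gprod phiHT_rprod)

lemma HT_subset_HL: "HT \<subseteq> HL"
proof
  fix x assume x: "x \<in> HT"
  then have "x \<in> carrier (TVB n)"
    by (simp add: kernel_def)
  then obtain y t where y: "y \<in> HT \<inter> HL" and t: "t \<in> gamma_rho_prods" and xyt: "x = y \<otimes>\<^bsub>TVB n\<^esub> t"
    using tvb_decomposition by blast
  have "phiHT x = t"
    using y t gamma_rho_prods_closed[OF t]
    by (simp add: xyt group_hom.hom_mult[OF group_hom_phiHT] phiHT_gamma_rho_prods kernel_def)
  then have "t = \<one>\<^bsub>TVB n\<^esub>"
    using x by (simp add: kernel_def)
  then show "x \<in> HL"
    using y by (simp add: xyt kernel_def)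
qed

lemma HL_subset_HT: "HL \<subseteq> HT"
proof
  fix x assume x: "x \<in> HL"
  then have "x \<in> carrier (TVB n)"
    by (simp add: kernel_def)
  then obtain y t where y: "y \<in> HT \<inter> HL" and t: "t \<in> gamma_rho_prods" and xyt: "x = y \<otimes>\<^bsub>TVB n\<^esub> t"
    using tvb_decomposition by blast
  obtain a L where aL: "set a \<subseteq> {1..n}" "set L \<subseteq> {1..n-1}" and t_eq: "t = gprod a \<otimes>\<^bsub>TVB n\<^esub> rprod L"
    using t by (auto simp: gamma_rho_prods_def)
  have y_carrier: "y \<in> carrier (TVB n)"
    using y by (simp add: kernel_def)
  have "t = inv\<^bsub>TVB n\<^esub> y \<otimes>\<^bsub>TVB n\<^esub> x"
    using y_carrier gamma_rho_prods_closed[OF t] by (simp add: xyt m_assoc[symmetric])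
  then have t_HL: "t \<in> HL"
    using x y subgroup.m_closed[OF subgroup_HL] subgroup.m_inv_closed[OF subgroup_HL] by simp
  then have "phiH (gprod a) \<circ> phiH (rprod L) = id"
    using HL_subset_kernel_phiH aL group_hom.hom_mult[OF group_hom_phiH, of "gprod a" "rprod L"]
    by (auto simp: t_eq kernel_def sym_group_mult sym_group_one)
  moreover have "phiH (gprod a) = id"
    using gprod_in_kernel_phiH[OF aL(1)] by (simp add: kernel_def sym_group_one)
  ultimately have "rprod L = \<one>\<^bsub>TVB n\<^esub>"
    using rprod_eq_one_if_phiH_id[OF aL(2)] by simp
  then have "t = gprod a"
    using aL by (simp add: t_eq)
  then have "t = \<one>\<^bsub>TVB n\<^esub>"
    using t_HL aL by (simp add: kernel_def psiH_gprod)
  then show "x \<in> HT"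
    using y by (simp add: xyt kernel_def)
qed

lemma HT_eq_HL: "HT = HL"
  using HT_subset_HL HL_subset_HT by blast

end

theorem mainTheorem19:
  fixes n :: nat
    and phiHT :: "tvb_gen word set \<Rightarrow> tvb_gen word set"
    and phiH :: "tvb_gen word set \<Rightarrow> nat \<Rightarrow> nat"
    and psiH :: "tvb_gen word set \<Rightarrow> tvb_gen word set"
  assumes "n \<ge> 2"
    and "is_phi_HT n phiHT"
    and "is_phi_H n phiH"
    and "is_psi_H n phiH psiH"
  shows "(TVB n)\<lparr>carrier := kernel (TVB n) (TS n) phiHT\<rparr>
           \<cong> (TVB n)\<lparr>carrier := kernel (TVH n phiH) (A n) psiH\<rparr>"
proof -
  interpret tvb_kernels n phiHT phiH psiH
    using assms(2-4) by unfold_locales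
  show ?thesis
    by (simp add: HT_eq_HL)
qed

end
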